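(* Let $\mathcal{A},\mathcal{C}$ be small categories and $\Gamma,P:\mathcal{A}^{op}\times\mathcal{A}\times\mathcal{C}^{op}\times\mathcal{C}\to\mathbf{Set}$ functors. Let $\alpha,\beta$ be dinatural transformations, dinatural in $(a,b,x)\in\mathcal{A}^{op}\times\mathcal{A}\times\mathcal{C}$, from $(a',b',x',a,b,x)\mapsto\hom_{\mathcal{A}}(a,b)\times\Gamma(b',a',x',x)$ to $(a',b',x',a,b,x)\mapsto P(a,b,x',x)$, with components $\alpha_{a,b,x},\beta_{a,b,x}:\hom_{\mathcal{A}}(a,b)\times\Gamma(b,a,x,x)\to P(a,b,x,x)$. If $\alpha_{z,z,x}(\mathrm{id}_z,k)=\beta_{z,z,x}(\mathrm{id}_z,k)$ for all $z\in\mathcal{A}$, $x\in\mathcal{C}$, $k\in\Gamma(z,z,x,x)$, then $\alpha_{a,b,x}(e,k)=\beta_{a,b,x}(e,k)$ for all $a,b\in\mathcal{A}$, $x\in\mathcal{C}$, $e\in\hom_{\mathcal{A}}(a,b)$, $k\in\Gamma(b,a,x,x)$.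
   Context: For difunctors $F,G:\mathcal{B}^{op}\times\mathcal{B}\to\mathcal{D}$, a dinatural transformation is a family $\alpha_x:F(x,x)\to G(x,x)$ such that for every $f:a\to b$: $G(f,\mathrm{id}_b)\circ\alpha_b\circ F(\mathrm{id}_b,f)=G(\mathrm{id}_a,f)\circ\alpha_a\circ F(f,\mathrm{id}_a)$. For $\mathcal{B}$ a product category arguments are reordered freely; primed arguments are the contravariant ones. *)

theory Defs
  imports Main
begin

text \<open>A (small) category: a set of objects, hom-sets, identities and composition.
  Convention: cmp C g f is g after f, for f : a -> b and g : b -> c.\<close>

record ('o, 'm) category =
  Ob  :: "'o set"
  Hom :: "'o \<Rightarrow> 'o \<Rightarrow> 'm set"
  Idm :: "'o \<Rightarrow> 'm"
  cmp :: "'m \<Rightarrow> 'm \<Rightarrow> 'm"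

definition is_category :: "('o, 'm) category \<Rightarrow> bool" where
  "is_category C \<longleftrightarrow>
     (\<forall>a\<in>Ob C. Idm C a \<in> Hom C a a) \<and>
     (\<forall>a\<in>Ob C. \<forall>b\<in>Ob C. \<forall>c\<in>Ob C. \<forall>f\<in>Hom C a b. \<forall>g\<in>Hom C b c.
        cmp C g f \<in> Hom C a c) \<and>
     (\<forall>a\<in>Ob C. \<forall>b\<in>Ob C. \<forall>f\<in>Hom C a b.
        cmp C f (Idm C a) = f \<and> cmp C (Idm C b) f = f) \<and>
     (\<forall>a\<in>Ob C. \<forall>b\<in>Ob C. \<forall>c\<in>Ob C. \<forall>d\<in>Ob C.
        \<forall>f\<in>Hom C a b. \<forall>g\<in>Hom C b c. \<forall>h\<in>Hom C c d.
        cmp C h (cmp C g f) = cmp C (cmp C h g) f)"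

text \<open>Such a functor is given by its object part Fo p q r s (a set) and its
  morphism part Fm f g h k, which for f : p2 -> p1, g : q1 -> q2 in A and
  h : r2 -> r1, k : s1 -> s2 in C is a function
  Fo p1 q1 r1 s1 -> Fo p2 q2 r2 s2 (first and third slots contravariant).\<close>

definition is_functor4 ::
  "('ao, 'am) category \<Rightarrow> ('co, 'cm) category \<Rightarrow>
   ('ao \<Rightarrow> 'ao \<Rightarrow> 'co \<Rightarrow> 'co \<Rightarrow> 'x set) \<Rightarrow>
   ('am \<Rightarrow> 'am \<Rightarrow> 'cm \<Rightarrow> 'cm \<Rightarrow> 'x \<Rightarrow> 'x) \<Rightarrow> bool" where
  "is_functor4 A C Fo Fm \<longleftrightarrow>
     (\<forall>p1\<in>Ob A. \<forall>p2\<in>Ob A. \<forall>q1\<in>Ob A. \<forall>q2\<in>Ob A.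
      \<forall>r1\<in>Ob C. \<forall>r2\<in>Ob C. \<forall>s1\<in>Ob C. \<forall>s2\<in>Ob C.
      \<forall>f\<in>Hom A p2 p1. \<forall>g\<in>Hom A q1 q2. \<forall>h\<in>Hom C r2 r1. \<forall>k\<in>Hom C s1 s2.
      \<forall>y\<in>Fo p1 q1 r1 s1. Fm f g h k y \<in> Fo p2 q2 r2 s2) \<and>
     (\<forall>p\<in>Ob A. \<forall>q\<in>Ob A. \<forall>r\<in>Ob C. \<forall>s\<in>Ob C. \<forall>y\<in>Fo p q r s.
      Fm (Idm A p) (Idm A q) (Idm C r) (Idm C s) y = y) \<and>
     (\<forall>p1\<in>Ob A. \<forall>p2\<in>Ob A. \<forall>p3\<in>Ob A. \<forall>q1\<in>Ob A. \<forall>q2\<in>Ob A. \<forall>q3\<in>Ob A.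
      \<forall>r1\<in>Ob C. \<forall>r2\<in>Ob C. \<forall>r3\<in>Ob C. \<forall>s1\<in>Ob C. \<forall>s2\<in>Ob C. \<forall>s3\<in>Ob C.
      \<forall>f1\<in>Hom A p2 p1. \<forall>g1\<in>Hom A q1 q2. \<forall>h1\<in>Hom C r2 r1. \<forall>k1\<in>Hom C s1 s2.
      \<forall>f2\<in>Hom A p3 p2. \<forall>g2\<in>Hom A q2 q3. \<forall>h2\<in>Hom C r3 r2. \<forall>k2\<in>Hom C s2 s3.
      \<forall>y\<in>Fo p1 q1 r1 s1.
        Fm (cmp A f1 f2) (cmp A g2 g1) (cmp C h1 h2) (cmp C k2 k1) y
          = Fm f2 g2 h2 k2 (Fm f1 g1 h1 k1 y))"

text \<open>Dinatural in (a,b,x) in A^op x A x C, from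
  (a',b',x',a,b,x) |-> hom_A(a,b) x Gamma(b',a',x',x) to
  (a',b',x',a,b,x) |-> P(a,b,x',x).
  Component alpha a b x e k for e in hom_A(a,b), k in Gamma(b,a,x,x).
  The dinaturality square for a morphism (f,g,h) : (a1,b1,x1) -> (a2,b2,x2) of
  A^op x A x C (so f : a2 -> a1 in A, g : b1 -> b2, h : x1 -> x2), evaluated at
  (e,k) in hom_A(a1,b1) x Gamma(b2,a2,x2,x1), is written out below.\<close>

definition is_dinat ::
  "('ao, 'am) category \<Rightarrow> ('co, 'cm) category \<Rightarrow>
   ('ao \<Rightarrow> 'ao \<Rightarrow> 'co \<Rightarrow> 'co \<Rightarrow> 'x set) \<Rightarrow>
   ('am \<Rightarrow> 'am \<Rightarrow> 'cm \<Rightarrow> 'cm \<Rightarrow> 'x \<Rightarrow> 'x) \<Rightarrow>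
   ('ao \<Rightarrow> 'ao \<Rightarrow> 'co \<Rightarrow> 'co \<Rightarrow> 'y set) \<Rightarrow>
   ('am \<Rightarrow> 'am \<Rightarrow> 'cm \<Rightarrow> 'cm \<Rightarrow> 'y \<Rightarrow> 'y) \<Rightarrow>
   ('ao \<Rightarrow> 'ao \<Rightarrow> 'co \<Rightarrow> 'am \<Rightarrow> 'x \<Rightarrow> 'y) \<Rightarrow> bool" where
  "is_dinat A C \<Gamma>o \<Gamma>m Po Pm \<alpha> \<longleftrightarrow>
     (\<forall>a\<in>Ob A. \<forall>b\<in>Ob A. \<forall>x\<in>Ob C. \<forall>e\<in>Hom A a b. \<forall>k\<in>\<Gamma>o b a x x.
        \<alpha> a b x e k \<in> Po a b x x) \<and>
     (\<forall>a1\<in>Ob A. \<forall>a2\<in>Ob A. \<forall>b1\<in>Ob A. \<forall>b2\<in>Ob A. \<forall>x1\<in>Ob C. \<forall>x2\<in>Ob C.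
      \<forall>f\<in>Hom A a2 a1. \<forall>g\<in>Hom A b1 b2. \<forall>h\<in>Hom C x1 x2.
      \<forall>e\<in>Hom A a1 b1. \<forall>k\<in>\<Gamma>o b2 a2 x2 x1.
        Pm (Idm A a2) (Idm A b2) h (Idm C x2)
           (\<alpha> a2 b2 x2 (cmp A g (cmp A e f)) (\<Gamma>m (Idm A b2) (Idm A a2) (Idm C x2) h k))
        = Pm f g (Idm C x1) h
           (\<alpha> a1 b1 x1 e (\<Gamma>m g f h (Idm C x1) k)))"

end

theory Submission
  imports Defs
begin

(* The dinaturality square for the morphism (id_a, e, id_x) : (a, a, x) -> (a, b, x),
   evaluated at (id_a, k), expresses the component at (e, k) through the component at
   the identity id_a. *)

lemma is_category_Idm_in_Hom:
  assumes "is_category A" and "a \<in> Ob A"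
  shows "Idm A a \<in> Hom A a a"
  using assms unfolding is_category_def by blast

lemma is_category_cmp_Idm_right:
  assumes "is_category A" and "a \<in> Ob A" and "b \<in> Ob A" and "f \<in> Hom A a b"
  shows "cmp A f (Idm A a) = f"
  using assms unfolding is_category_def by blast

lemma is_functor4_map_in_Fo:
  assumes "is_functor4 A C Fo Fm"
    and "p1 \<in> Ob A" "p2 \<in> Ob A" "q1 \<in> Ob A" "q2 \<in> Ob A"
    and "r1 \<in> Ob C" "r2 \<in> Ob C" "s1 \<in> Ob C" "s2 \<in> Ob C"
    and "f \<in> Hom A p2 p1" "g \<in> Hom A q1 q2" "h \<in> Hom C r2 r1" "k \<in> Hom C s1 s2"
    and "y \<in> Fo p1 q1 r1 s1"
  shows "Fm f g h k y \<in> Fo p2 q2 r2 s2"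
proof -
  have "\<forall>p1\<in>Ob A. \<forall>p2\<in>Ob A. \<forall>q1\<in>Ob A. \<forall>q2\<in>Ob A.
      \<forall>r1\<in>Ob C. \<forall>r2\<in>Ob C. \<forall>s1\<in>Ob C. \<forall>s2\<in>Ob C.
      \<forall>f\<in>Hom A p2 p1. \<forall>g\<in>Hom A q1 q2. \<forall>h\<in>Hom C r2 r1. \<forall>k\<in>Hom C s1 s2.
      \<forall>y\<in>Fo p1 q1 r1 s1. Fm f g h k y \<in> Fo p2 q2 r2 s2"
    using assms(1) unfolding is_functor4_def by (rule conjunct1)
  then show ?thesis
    using assms(2-) by blast
qed

lemma is_functor4_Idm:
  assumes "is_functor4 A C Fo Fm"
    and "p \<in> Ob A" "q \<in> Ob A" "r \<in> Ob C" "s \<in> Ob C" and "y \<in> Fo p q r s"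
  shows "Fm (Idm A p) (Idm A q) (Idm C r) (Idm C s) y = y"
  using assms unfolding is_functor4_def by blast

lemma is_dinat_in_Po:
  assumes "is_dinat A C \<Gamma>o \<Gamma>m Po Pm \<gamma>"
    and "a \<in> Ob A" "b \<in> Ob A" "x \<in> Ob C" and "e \<in> Hom A a b" and "k \<in> \<Gamma>o b a x x"
  shows "\<gamma> a b x e k \<in> Po a b x x"
  using assms unfolding is_dinat_def by blast

lemma is_dinat_square:
  assumes "is_dinat A C \<Gamma>o \<Gamma>m Po Pm \<gamma>"
    and "a1 \<in> Ob A" "a2 \<in> Ob A" "b1 \<in> Ob A" "b2 \<in> Ob A" "x1 \<in> Ob C" "x2 \<in> Ob C"
    and "f \<in> Hom A a2 a1" "g \<in> Hom A b1 b2" "h \<in> Hom C x1 x2"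
    and "e \<in> Hom A a1 b1" "k \<in> \<Gamma>o b2 a2 x2 x1"
  shows "Pm (Idm A a2) (Idm A b2) h (Idm C x2)
           (\<gamma> a2 b2 x2 (cmp A g (cmp A e f)) (\<Gamma>m (Idm A b2) (Idm A a2) (Idm C x2) h k))
       = Pm f g (Idm C x1) h (\<gamma> a1 b1 x1 e (\<Gamma>m g f h (Idm C x1) k))"
  using assms unfolding is_dinat_def by blast

lemma is_dinat_eq_via_Idm:
  assumes A: "is_category A" and C: "is_category C"
    and \<Gamma>: "is_functor4 A C \<Gamma>o \<Gamma>m" and P: "is_functor4 A C Po Pm"
    and \<gamma>: "is_dinat A C \<Gamma>o \<Gamma>m Po Pm \<gamma>"
    and a: "a \<in> Ob A" and b: "b \<in> Ob A" and x: "x \<in> Ob C"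
    and e: "e \<in> Hom A a b" and k: "k \<in> \<Gamma>o b a x x"
  shows "\<gamma> a b x e k
       = Pm (Idm A a) e (Idm C x) (Idm C x)
           (\<gamma> a a x (Idm A a) (\<Gamma>m e (Idm A a) (Idm C x) (Idm C x) k))"
proof -
  have ida: "Idm A a \<in> Hom A a a" and idx: "Idm C x \<in> Hom C x x"
    using A C a x by (simp_all add: is_category_Idm_in_Hom)
  have "cmp A e (cmp A (Idm A a) (Idm A a)) = e"
    using A a b e ida by (simp add: is_category_cmp_Idm_right)
  moreover have "\<Gamma>m (Idm A b) (Idm A a) (Idm C x) (Idm C x) k = k"
    using \<Gamma> b a x x k by (rule is_functor4_Idm)
  ultimately have "Pm (Idm A a) (Idm A b) (Idm C x) (Idm C x) (\<gamma> a b x e k)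
      = Pm (Idm A a) e (Idm C x) (Idm C x)
          (\<gamma> a a x (Idm A a) (\<Gamma>m e (Idm A a) (Idm C x) (Idm C x) k))"
    using is_dinat_square[OF \<gamma> a a a b x x ida e idx ida k] by simp
  moreover have "Pm (Idm A a) (Idm A b) (Idm C x) (Idm C x) (\<gamma> a b x e k) = \<gamma> a b x e k"
    using P a b x x is_dinat_in_Po[OF \<gamma> a b x e k] by (rule is_functor4_Idm)
  ultimately show ?thesis by simp
qed

theorem mainTheorem7:
  fixes A :: "('ao, 'am) category" and C :: "('co, 'cm) category"
    and \<Gamma>o :: "'ao \<Rightarrow> 'ao \<Rightarrow> 'co \<Rightarrow> 'co \<Rightarrow> 'x set"
    and \<Gamma>m :: "'am \<Rightarrow> 'am \<Rightarrow> 'cm \<Rightarrow> 'cm \<Rightarrow> 'x \<Rightarrow> 'x"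
    and Po :: "'ao \<Rightarrow> 'ao \<Rightarrow> 'co \<Rightarrow> 'co \<Rightarrow> 'y set"
    and Pm :: "'am \<Rightarrow> 'am \<Rightarrow> 'cm \<Rightarrow> 'cm \<Rightarrow> 'y \<Rightarrow> 'y"
    and \<alpha> \<beta> :: "'ao \<Rightarrow> 'ao \<Rightarrow> 'co \<Rightarrow> 'am \<Rightarrow> 'x \<Rightarrow> 'y"
  assumes "is_category A" and "is_category C"
    and "is_functor4 A C \<Gamma>o \<Gamma>m" and "is_functor4 A C Po Pm"
    and "is_dinat A C \<Gamma>o \<Gamma>m Po Pm \<alpha>" and "is_dinat A C \<Gamma>o \<Gamma>m Po Pm \<beta>"
    and "\<forall>z\<in>Ob A. \<forall>x\<in>Ob C. \<forall>k\<in>\<Gamma>o z z x x.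
           \<alpha> z z x (Idm A z) k = \<beta> z z x (Idm A z) k"
  shows "\<forall>a\<in>Ob A. \<forall>b\<in>Ob A. \<forall>x\<in>Ob C. \<forall>e\<in>Hom A a b. \<forall>k\<in>\<Gamma>o b a x x.
           \<alpha> a b x e k = \<beta> a b x e k"
proof (intro ballI)
  fix a b x e k
  assume a: "a \<in> Ob A" and b: "b \<in> Ob A" and x: "x \<in> Ob C"
    and e: "e \<in> Hom A a b" and k: "k \<in> \<Gamma>o b a x x"
  let ?k' = "\<Gamma>m e (Idm A a) (Idm C x) (Idm C x) k"
  have "?k' \<in> \<Gamma>o a a x x"
    using assms(1,2) a b x e k
    by (intro is_functor4_map_in_Fo[OF assms(3)]) (simp_all add: is_category_Idm_in_Hom)
  then have "\<alpha> a a x (Idm A a) ?k' = \<beta> a a x (Idm A a) ?k'"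
    using assms(7) a x by blast
  then show "\<alpha> a b x e k = \<beta> a b x e k"
    using is_dinat_eq_via_Idm[OF assms(1-4) assms(5) a b x e k]
      is_dinat_eq_via_Idm[OF assms(1-4) assms(6) a b x e k]
    by simp
qed

end
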